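(* Let $n\geq 2$. For every $1\leq k\leq \lceil n/2\rceil-1$, the complete graph $K_n$ is not strong $k$-cop-win. Moreover, $K_n$ is strong $\lceil n/2\rceil$-cop-win and $\lim_{m\to\infty}\mathrm{capt}_{\lceil n/2\rceil}(K_n,m)=1$.
   Context: All graphs are finite, simple, connected and reflexive (a player may stay in place). The game of $k$ cops and $m$ robbers on $G$: in round 0 the cops first choose starting vertices, then the robbers choose theirs. In each round $i\geq 1$, all $k$ cops move (each to an adjacent vertex or staying), then all $m$ robbers move likewise. Several players may occupy the same vertex. Whenever a cop and some robbers occupy the same vertex, those robbers are captured and take no further part in the game. Both sides have full information. The cops win if all robbers are captured after finitely many rounds. $G$ is $k$-cop-win if $k$ cops can always win against one robber. For a $k$-cop-win graph $G$, $\mathrm{capt}_k(G,m)$ is the index of the round in which the last robber is captured when $k$ cops play to minimize this index and $m$ robbers play to maximize it. $G$ is strong $k$-cop-win if $\lim_{m\to\infty}\mathrm{capt}_k(G,m)$ exists (and is finite). *)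

theory Defs
  imports Complex_Main
begin

text \<open>A graph is given by a vertex set V and an adjacency relation E
  (symmetric, irreflexive). Players may stay in place, so moves go to the
  closed neighbourhood.\<close>

definition closed_nbhd :: "'a set \<Rightarrow> ('a \<Rightarrow> 'a \<Rightarrow> bool) \<Rightarrow> 'a \<Rightarrow> 'a set" where
  "closed_nbhd V E v = {u \<in> V. u = v \<or> E v u}"

definition complete_graph :: "'a set \<Rightarrow> 'a \<Rightarrow> 'a \<Rightarrow> bool" where
  "complete_graph V u v \<longleftrightarrow> u \<in> V \<and> v \<in> V \<and> u \<noteq> v"

text \<open>Cop positions: c :: nat \<Rightarrow> 'a (indices < k).
  Robber positions: R :: nat \<Rightarrow> 'a option (indices < m; None = captured).\<close>

definition cop_at :: "(nat \<Rightarrow> 'a) \<Rightarrow> nat \<Rightarrow> 'a \<Rightarrow> bool" where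
  "cop_at c k v \<longleftrightarrow> (\<exists>i<k. c i = v)"

definition capture :: "(nat \<Rightarrow> 'a) \<Rightarrow> nat \<Rightarrow> (nat \<Rightarrow> 'a option) \<Rightarrow> (nat \<Rightarrow> 'a option)" where
  "capture c k R = (\<lambda>j. case R j of None \<Rightarrow> None
                      | Some v \<Rightarrow> (if cop_at c k v then None else Some v))"

definition all_caught :: "nat \<Rightarrow> (nat \<Rightarrow> 'a option) \<Rightarrow> bool" where
  "all_caught m R \<longleftrightarrow> (\<forall>j<m. R j = None)"

definition cops_move :: "'a set \<Rightarrow> ('a \<Rightarrow> 'a \<Rightarrow> bool) \<Rightarrow> nat \<Rightarrow> (nat \<Rightarrow> 'a) \<Rightarrow> (nat \<Rightarrow> 'a) \<Rightarrow> bool" where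
  "cops_move V E k c c' \<longleftrightarrow> (\<forall>i<k. c' i \<in> closed_nbhd V E (c i))"

definition robbers_move :: "'a set \<Rightarrow> ('a \<Rightarrow> 'a \<Rightarrow> bool) \<Rightarrow> nat \<Rightarrow> (nat \<Rightarrow> 'a option) \<Rightarrow> (nat \<Rightarrow> 'a option) \<Rightarrow> bool" where
  "robbers_move V E m R R' \<longleftrightarrow>
     (\<forall>j<m. (R j = None \<longrightarrow> R' j = None) \<and>
            (\<forall>v. R j = Some v \<longrightarrow> (\<exists>w. R' j = Some w \<and> w \<in> closed_nbhd V E v)))"

text \<open>cops_win_within V E k m t c R: from the position (c,R) reached at the end
  of some round r (after the robbers' move and captures), the k cops can force
  that all m robbers are captured by the end of round r + t.\<close>
fun cops_win_within :: "'a set \<Rightarrow> ('a \<Rightarrow> 'a \<Rightarrow> bool) \<Rightarrow> nat \<Rightarrow> nat \<Rightarrow> nat \<Rightarrow> (nat \<Rightarrow> 'a) \<Rightarrow> (nat \<Rightarrow> 'a option) \<Rightarrow> bool" where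
  "cops_win_within V E k m 0 c R = all_caught m R"
| "cops_win_within V E k m (Suc t) c R =
     (all_caught m R \<or>
      (\<exists>c'. cops_move V E k c c' \<and>
         (\<forall>R'. robbers_move V E m (capture c' k R) R' \<longrightarrow>
                 cops_win_within V E k m t c' (capture c' k R'))))"

text \<open>k cops can guarantee that all m robbers are captured by round t
  (round 0: cops place, then robbers place, then captures).\<close>
definition capt_within :: "'a set \<Rightarrow> ('a \<Rightarrow> 'a \<Rightarrow> bool) \<Rightarrow> nat \<Rightarrow> nat \<Rightarrow> nat \<Rightarrow> bool" where
  "capt_within V E k m t \<longleftrightarrow>
     (\<exists>c0. (\<forall>i<k. c0 i \<in> V) \<and>
        (\<forall>R0. (\<forall>j<m. \<exists>v\<in>V. R0 j = Some v) \<longrightarrow>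
              cops_win_within V E k m t c0 (capture c0 k R0)))"

definition cop_win :: "'a set \<Rightarrow> ('a \<Rightarrow> 'a \<Rightarrow> bool) \<Rightarrow> nat \<Rightarrow> bool" where
  "cop_win V E k \<longleftrightarrow> (\<exists>t. capt_within V E k 1 t)"

definition capt :: "'a set \<Rightarrow> ('a \<Rightarrow> 'a \<Rightarrow> bool) \<Rightarrow> nat \<Rightarrow> nat \<Rightarrow> nat" where
  "capt V E k m = (LEAST t. capt_within V E k m t)"

definition strong_cop_win :: "'a set \<Rightarrow> ('a \<Rightarrow> 'a \<Rightarrow> bool) \<Rightarrow> nat \<Rightarrow> bool" where
  "strong_cop_win V E k \<longleftrightarrow> cop_win V E k \<and>
     (\<exists>L::real. (\<lambda>m. real (capt V E k m)) \<longlonglongrightarrow> L)"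

end

theory Submission
  imports Defs
begin

text \<open>With \<open>h = \<lceil>n/2\<rceil>\<close> cops, place the cops on \<open>h\<close> distinct vertices; the robbers
  not captured at once stand on the remaining \<open>n - h \<le> h\<close> vertices, all of which the cops
  occupy in round 1, since in \<open>K\<^sub>n\<close> every cop can jump anywhere. As \<open>h < n\<close>, a robber can
  escape round 0, so the capture time is exactly 1 for every \<open>m \<ge> 1\<close>.

  Against \<open>k < n/2\<close> cops the robbers keep the invariant that every vertex without a
  cop holds a group of at least \<open>n\<^sup>t\<close> robbers, where \<open>t\<close> is the number of rounds still
  to be survived. After the cops move there is a vertex occupied by cops neither before
  nor after the move; its robbers split evenly over all \<open>n\<close> vertices, which restores
  the invariant for \<open>t - 1\<close>. So \<open>n\<^sup>t\<^sup>+\<^sup>1\<close> robbers survive \<open>t\<close> rounds, the capture time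
  is unbounded in \<open>m\<close>, and its limit does not exist.\<close>

subsection \<open>Groups of robbers that can be spread out repeatedly\<close>

text \<open>For finite nonempty \<open>V\<close>, \<open>spreadable V t A\<close> says that \<open>A\<close> has at least \<open>card V ^ t\<close>
  elements; the recursive form is the one the robbers' strategy uses.\<close>

fun spreadable :: "'a set \<Rightarrow> nat \<Rightarrow> nat set \<Rightarrow> bool" where
  "spreadable V 0 A \<longleftrightarrow> A \<noteq> {}"
| "spreadable V (Suc t) A \<longleftrightarrow> (\<exists>f::nat \<Rightarrow> 'a. \<forall>v\<in>V. spreadable V t {j\<in>A. f j = v})"

lemma spreadable_mono: "spreadable V t A \<Longrightarrow> A \<subseteq> B \<Longrightarrow> spreadable V t B"
proof (induction t arbitrary: A B)
  case (Suc t)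
  obtain f where f: "\<forall>v\<in>V. spreadable V t {j\<in>A. f j = v}"
    using Suc.prems(1) by auto
  have "spreadable V t {j\<in>B. f j = v}" if "v \<in> V" for v
  proof (rule Suc.IH)
    show "spreadable V t {j\<in>A. f j = v}"
      using f that by blast
    show "{j\<in>A. f j = v} \<subseteq> {j\<in>B. f j = v}"
      using Suc.prems(2) by blast
  qed
  then show ?case
    by auto
qed auto

lemma spreadable_nonempty: "V \<noteq> {} \<Longrightarrow> spreadable V t A \<Longrightarrow> A \<noteq> {}"
proof (induction t arbitrary: A)
  case (Suc t)
  then obtain f v where "v \<in> V" "spreadable V t {j\<in>A. f j = v}"
    by auto
  then show ?case
    using Suc.IH by blast
qed auto

lemma spreadable_SucE:
  assumes "spreadable V (Suc t) A" and "v\<^sub>0 \<in> V"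
  obtains g where "\<And>j. g j \<in> V" and "\<And>v. v \<in> V \<Longrightarrow> spreadable V t {j\<in>A. g j = v}"
proof -
  obtain f where f: "\<forall>v\<in>V. spreadable V t {j\<in>A. f j = v}"
    using assms(1) by auto
  define g where "g j = (if f j \<in> V then f j else v\<^sub>0)" for j
  show thesis
  proof (rule that)
    show "g j \<in> V" for j
      using assms(2) by (simp add: g_def)
    fix v assume "v \<in> V"
    then have "{j\<in>A. f j = v} \<subseteq> {j\<in>A. g j = v}"
      by (auto simp: g_def)
    then show "spreadable V t {j\<in>A. g j = v}"
      using f \<open>v \<in> V\<close> spreadable_mono by blast
  qed
qed

lemma spreadable_atLeastLessThan:
  assumes e: "bij_betw e {..<n} V"
  shows "spreadable V t {a..<a + n ^ t}"
proof (induction t arbitrary: a)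
  case (Suc t)
  define f where "f j = e ((j - a) div n ^ t)" for j
  have "spreadable V t {j\<in>{a..<a + n ^ Suc t}. f j = v}" if "v \<in> V" for v
  proof -
    obtain i where i: "i < n" "v = e i"
      using e \<open>v \<in> V\<close> by (auto simp: bij_betw_def)
    have "j \<in> {j\<in>{a..<a + n ^ Suc t}. f j = v}" if "j \<in> {a + i * n ^ t..<a + i * n ^ t + n ^ t}" for j
    proof -
      define r where "r = j - (a + i * n ^ t)"
      with that have r: "j = a + i * n ^ t + r" "r < n ^ t"
        by auto
      then have "0 < n ^ t"
        by linarith
      have "(i + 1) * n ^ t \<le> n * n ^ t"
        using i(1) by (intro mult_right_mono) auto
      with r have "j < a + n ^ Suc t"
        by simp
      moreover have "(j - a) div n ^ t = i"
        using r \<open>0 < n ^ t\<close> by (simp add: add.commute[of "i * n ^ t"])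
      ultimately show ?thesis
        using r(1) i(2) by (simp add: f_def)
    qed
    then show ?thesis
      using Suc.IH spreadable_mono by blast
  qed
  then show ?case
    by auto
qed auto

lemma spreadable_lessThan:
  assumes "finite V" and "card V ^ t \<le> m"
  shows "spreadable V t {..<m}"
proof -
  obtain e where "bij_betw e {0..<card V} V"
    using assms(1) ex_bij_betw_nat_finite by blast
  then have "bij_betw e {..<card V} V"
    by (simp add: lessThan_atLeast0)
  then have "spreadable V t {0..<0 + card V ^ t}"
    by (rule spreadable_atLeastLessThan)
  moreover have "{0..<0 + card V ^ t} \<subseteq> {..<m}"
    using assms(2) by auto
  ultimately show ?thesis
    by (rule spreadable_mono)
qed

lemma closed_nbhd_complete_graph: "v \<in> V \<Longrightarrow> closed_nbhd V (complete_graph V) v = V"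
  unfolding closed_nbhd_def complete_graph_def by auto

lemma cop_at_iff_image: "cop_at c k v \<longleftrightarrow> v \<in> c ` {..<k}"
  unfolding cop_at_def by auto

lemma capture_eq_Some: "capture c k R j = Some v \<longleftrightarrow> R j = Some v \<and> \<not> cop_at c k v"
  unfolding capture_def by (auto split: option.split)

lemma robbers_move_in_vertices:
  assumes "robbers_move V E m R R'" and "j < m" and "R' j = Some w"
  shows "w \<in> V"
  using assms by (cases "R j") (auto simp: robbers_move_def closed_nbhd_def)

lemma ex_vertex_free_of_cops:
  assumes "finite V" and "k + l < card V"
  shows "\<exists>u\<in>V. \<not> cop_at c k u \<and> \<not> cop_at c' l u"
proof -
  let ?C = "c ` {..<k} \<union> c' ` {..<l}"
  have "card ?C \<le> k + l"
    using card_Un_le[of "c ` {..<k}" "c' ` {..<l}"]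
      card_image_le[of "{..<k}" c] card_image_le[of "{..<l}" c'] by simp
  then have "\<not> V \<subseteq> ?C"
    using assms(2) card_mono[of ?C V] by auto
  then show ?thesis
    by (auto simp: cop_at_iff_image)
qed

subsection \<open>The robbers' strategy against fewer than \<open>n/2\<close> cops\<close>

definition robbers_spread ::
    "'a set \<Rightarrow> nat \<Rightarrow> nat \<Rightarrow> nat \<Rightarrow> (nat \<Rightarrow> 'a) \<Rightarrow> (nat \<Rightarrow> 'a option) \<Rightarrow> bool" where
  "robbers_spread V k m t c R \<longleftrightarrow>
     (\<forall>j<m. \<forall>v. R j = Some v \<longrightarrow> v \<in> V) \<and>
     (\<forall>v\<in>V. \<not> cop_at c k v \<longrightarrow> spreadable V t {j. j < m \<and> R j = Some v})"

lemma robbers_spread_not_all_caught: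
  assumes "finite V" and "k < card V" and "robbers_spread V k m t c R"
  shows "\<not> all_caught m R"
proof -
  obtain u where "u \<in> V" "\<not> cop_at c k u"
    using ex_vertex_free_of_cops[of V k 0 c c] assms(1,2) by auto
  then have "spreadable V t {j. j < m \<and> R j = Some u}"
    using assms(3) by (auto simp: robbers_spread_def)
  then have "{j. j < m \<and> R j = Some u} \<noteq> {}"
    by (rule spreadable_nonempty[rotated]) (use \<open>u \<in> V\<close> in auto)
  then show ?thesis
    by (auto simp: all_caught_def)
qed

lemma robbers_spread_step:
  assumes "finite V" and "2 * k < card V" and spread: "robbers_spread V k m (Suc t) c R"
  shows "\<exists>R'. robbers_move V (complete_graph V) m (capture c' k R) R' \<and>
              robbers_spread V k m t c' (capture c' k R')"
proof -
  obtain u where u: "u \<in> V" "\<not> cop_at c k u" "\<not> cop_at c' k u"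
    using ex_vertex_free_of_cops[of V k k c c'] assms(1,2) by auto
  define A where "A = {j. j < m \<and> R j = Some u}"
  have in_V: "\<forall>j<m. \<forall>v. R j = Some v \<longrightarrow> v \<in> V"
    using spread by (simp add: robbers_spread_def)
  have "spreadable V (Suc t) A"
    using spread u unfolding robbers_spread_def A_def by blast
  then obtain g where g: "\<And>j. g j \<in> V" "\<And>v. v \<in> V \<Longrightarrow> spreadable V t {j\<in>A. g j = v}"
    using u(1) spreadable_SucE by metis
  define R' where "R' j = (if j \<in> A then Some (g j) else capture c' k R j)" for j
  have A_uncaught: "capture c' k R j = Some u" if "j \<in> A" for j
    using that u(3) by (simp add: A_def capture_eq_Some)
  have "robbers_move V (complete_graph V) m (capture c' k R) R'"
    unfolding robbers_move_def
  proof (intro allI impI conjI)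
    fix j assume "j < m" "capture c' k R j = None"
    then show "R' j = None"
      using A_uncaught by (auto simp: R'_def)
  next
    fix j v assume "j < m" "capture c' k R j = Some v"
    then show "\<exists>w. R' j = Some w \<and> w \<in> closed_nbhd V (complete_graph V) v"
      using in_V g(1) by (auto simp: R'_def capture_eq_Some closed_nbhd_complete_graph)
  qed
  moreover have "robbers_spread V k m t c' (capture c' k R')"
    unfolding robbers_spread_def
  proof (intro conjI ballI impI allI)
    fix j v assume "j < m" "capture c' k R' j = Some v"
    then show "v \<in> V"
      using in_V g(1) by (auto simp: R'_def capture_eq_Some split: if_splits)
  next
    fix v assume "v \<in> V" "\<not> cop_at c' k v"
    then have "{j\<in>A. g j = v} \<subseteq> {j. j < m \<and> capture c' k R' j = Some v}"
      by (auto simp: A_def R'_def capture_eq_Some)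
    then show "spreadable V t {j. j < m \<and> capture c' k R' j = Some v}"
      using g(2) \<open>v \<in> V\<close> spreadable_mono by blast
  qed
  ultimately show ?thesis
    by blast
qed

lemma robbers_spread_not_cops_win_within:
  assumes "finite V" and "2 * k < card V"
  shows "robbers_spread V k m t c R \<Longrightarrow> \<not> cops_win_within V (complete_graph V) k m t c R"
proof (induction t arbitrary: c R)
  case 0
  have "k < card V"
    using assms(2) by linarith
  then show ?case
    using robbers_spread_not_all_caught[OF assms(1) _ "0.prems"] by simp
next
  case (Suc t)
  have "k < card V"
    using assms(2) by linarith
  then have "\<not> all_caught m R"
    using robbers_spread_not_all_caught[OF assms(1) _ Suc.prems] by simp
  moreover have "\<exists>R'. robbers_move V (complete_graph V) m (capture c' k R) R' \<and>
                   \<not> cops_win_within V (complete_graph V) k m t c' (capture c' k R')" for c'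
    using robbers_spread_step[OF assms Suc.prems] Suc.IH by blast
  ultimately show ?case
    by auto
qed

lemma robbers_spread_initial:
  assumes "finite V" and "V \<noteq> {}" and "card V ^ Suc t \<le> m"
  shows "\<exists>R. (\<forall>j<m. \<exists>v\<in>V. R j = Some v) \<and> robbers_spread V k m t c (capture c k R)"
proof -
  obtain v\<^sub>0 where "v\<^sub>0 \<in> V"
    using assms(2) by blast
  then obtain g where g: "\<And>j. g j \<in> V" "\<And>v. v \<in> V \<Longrightarrow> spreadable V t {j\<in>{..<m}. g j = v}"
    using spreadable_lessThan[OF assms(1,3)] spreadable_SucE by metis
  define R where "R j = Some (g j)" for j
  have "\<forall>j<m. \<exists>v\<in>V. R j = Some v"
    using g(1) by (simp add: R_def)
  moreover have "robbers_spread V k m t c (capture c k R)"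
    unfolding robbers_spread_def
  proof (intro conjI ballI impI allI)
    fix j v assume "capture c k R j = Some v"
    then show "v \<in> V"
      using g(1) by (auto simp: R_def capture_eq_Some)
  next
    fix v assume "v \<in> V" "\<not> cop_at c k v"
    then have "{j\<in>{..<m}. g j = v} \<subseteq> {j. j < m \<and> capture c k R j = Some v}"
      by (auto simp: R_def capture_eq_Some)
    then show "spreadable V t {j. j < m \<and> capture c k R j = Some v}"
      using g(2) \<open>v \<in> V\<close> spreadable_mono by blast
  qed
  ultimately show ?thesis
    by blast
qed

lemma not_capt_within_complete_graph:
  assumes "finite V" and "2 * k < card V" and "card V ^ Suc t \<le> m"
  shows "\<not> capt_within V (complete_graph V) k m t"
proof -
  have "V \<noteq> {}"
    using assms(2) by auto
  then show ?thesis
    unfolding capt_within_def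
    using robbers_spread_initial[OF assms(1) _ assms(3)]
      robbers_spread_not_cops_win_within[OF assms(1,2)] by blast
qed

lemma not_capt_within_complete_graph_zero:
  assumes "finite V" and "k < card V" and "0 < m"
  shows "\<not> capt_within V (complete_graph V) k m 0"
proof
  assume "capt_within V (complete_graph V) k m 0"
  then obtain c where c: "\<And>R. \<forall>j<m. \<exists>v\<in>V. R j = Some v \<Longrightarrow> all_caught m (capture c k R)"
    unfolding capt_within_def by auto
  obtain u where u: "u \<in> V" "\<not> cop_at c k u"
    using ex_vertex_free_of_cops[of V k 0 c c] assms(1,2) by auto
  then have "all_caught m (capture c k (\<lambda>_. Some u))"
    by (intro c) blast
  then show False
    using assms(3) u(2) by (auto simp: all_caught_def capture_def)
qed

subsection \<open>The cops' strategies\<close>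

lemma cops_win_within_one_per_round:
  assumes "0 < k"
  shows "\<forall>i<k. c i \<in> V \<Longrightarrow> \<forall>j<m. \<forall>v. R j = Some v \<longrightarrow> v \<in> V \<Longrightarrow>
    card {j. j < m \<and> R j \<noteq> None} \<le> t \<Longrightarrow> cops_win_within V (complete_graph V) k m t c R"
proof (induction t arbitrary: c R)
  case 0
  then show ?case
    by (auto simp: all_caught_def)
next
  case (Suc t)
  show ?case
  proof (cases "all_caught m R")
    case False
    then obtain j\<^sub>0 v where j\<^sub>0: "j\<^sub>0 < m" "R j\<^sub>0 = Some v"
      by (auto simp: all_caught_def)
    with Suc.prems(2) have "v \<in> V"
      by blast
    define c' where "c' = (\<lambda>_::nat. v)"
    have "cops_move V (complete_graph V) k c c'"
      using Suc.prems(1) \<open>v \<in> V\<close> by (simp add: cops_move_def c'_def closed_nbhd_complete_graph)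
    moreover have "cops_win_within V (complete_graph V) k m t c' (capture c' k R')"
      if move: "robbers_move V (complete_graph V) m (capture c' k R) R'" for R'
    proof (rule Suc.IH)
      show "\<forall>i<k. c' i \<in> V"
        using \<open>v \<in> V\<close> by (simp add: c'_def)
      show "\<forall>j<m. \<forall>w. capture c' k R' j = Some w \<longrightarrow> w \<in> V"
        using robbers_move_in_vertices[OF move] by (auto simp: capture_eq_Some)
      have "capture c' k R j\<^sub>0 = None"
        using assms j\<^sub>0(2) by (auto simp: capture_def cop_at_def c'_def)
      then have "{j. j < m \<and> capture c' k R' j \<noteq> None} \<subseteq> {j. j < m \<and> R j \<noteq> None} - {j\<^sub>0}"
        using move by (auto simp: robbers_move_def capture_def split: option.splits)
      then have "card {j. j < m \<and> capture c' k R' j \<noteq> None} \<le> card ({j. j < m \<and> R j \<noteq> None} - {j\<^sub>0})"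
        by (intro card_mono) auto
      also have "\<dots> = card {j. j < m \<and> R j \<noteq> None} - 1"
        using j\<^sub>0 by simp
      finally show "card {j. j < m \<and> capture c' k R' j \<noteq> None} \<le> t"
        using Suc.prems(3) by linarith
    qed
    ultimately show ?thesis
      by auto
  qed simp
qed

lemma capt_within_complete_graph_in_m_rounds:
  assumes "0 < k" and "V \<noteq> {}"
  shows "capt_within V (complete_graph V) k m m"
proof -
  obtain v\<^sub>0 where "v\<^sub>0 \<in> V"
    using assms(2) by blast
  define c where "c = (\<lambda>_::nat. v\<^sub>0)"
  have "cops_win_within V (complete_graph V) k m m c (capture c k R)"
    if "\<forall>j<m. \<exists>v\<in>V. R j = Some v" for R
  proof (rule cops_win_within_one_per_round[OF assms(1)])
    show "\<forall>i<k. c i \<in> V"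
      using \<open>v\<^sub>0 \<in> V\<close> by (simp add: c_def)
    show "\<forall>j<m. \<forall>v. capture c k R j = Some v \<longrightarrow> v \<in> V"
      using that by (auto simp: capture_eq_Some)
    have "card {j. j < m \<and> capture c k R j \<noteq> None} \<le> card {..<m}"
      by (intro card_mono) auto
    then show "card {j. j < m \<and> capture c k R j \<noteq> None} \<le> m"
      by simp
  qed
  moreover have "\<forall>i<k. c i \<in> V"
    using \<open>v\<^sub>0 \<in> V\<close> by (simp add: c_def)
  ultimately show ?thesis
    unfolding capt_within_def by blast
qed

text \<open>Enumerate \<open>V = {e 0, \<dots>, e (n - 1)}\<close>. The cops start on \<open>e 0, \<dots>, e (h - 1)\<close> and
  then move onto \<open>e h, \<dots>, e (n - 1)\<close>, which is possible as \<open>n - h \<le> h\<close>.\<close>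

lemma capt_within_complete_graph_one:
  assumes "finite V" and "card V \<le> 2 * h" and "h \<le> card V"
  shows "capt_within V (complete_graph V) h m 1"
proof -
  define n where "n = card V"
  obtain e where e: "bij_betw e {..<n} V"
    using ex_bij_betw_nat_finite[OF assms(1)] by (auto simp: n_def lessThan_atLeast0)
  define c' where "c' i = e (min (h + i) (n - 1))" for i
  have cops_in_V: "e i \<in> V" "c' i \<in> V" if "i < h" for i
    using that e assms(3) by (auto simp: c'_def n_def bij_betw_def)
  have cover: "cop_at e h v \<or> cop_at c' h v" if "v \<in> V" for v
  proof -
    obtain j where j: "j < n" "v = e j"
      using e \<open>v \<in> V\<close> by (auto simp: bij_betw_def)
    show ?thesis
    proof (cases "j < h")
      case True
      then show ?thesis
        using j(2) by (auto simp: cop_at_def)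
    next
      case False
      then have "j - h < h" "c' (j - h) = v"
        using j assms(2) by (auto simp: c'_def n_def)
      then show ?thesis
        by (auto simp: cop_at_def)
    qed
  qed
  have "cops_move V (complete_graph V) h e c'"
    using cops_in_V by (simp add: cops_move_def closed_nbhd_complete_graph)
  moreover have "all_caught m (capture c' h R')"
    if R: "\<forall>j<m. \<exists>v\<in>V. R j = Some v"
      and move: "robbers_move V (complete_graph V) m (capture c' h (capture e h R)) R'" for R R'
  proof -
    have "capture c' h (capture e h R) j = None" if "j < m" for j
    proof -
      obtain v where "v \<in> V" "R j = Some v"
        using R \<open>j < m\<close> by blast
      then show ?thesis
        using cover[of v] by (auto simp: capture_def)
    qed
    then show ?thesis
      using move by (simp add: all_caught_def robbers_move_def capture_def)
  qed
  ultimately have "cops_win_within V (complete_graph V) h m (Suc 0) e (capture e h R)"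
    if "\<forall>j<m. \<exists>v\<in>V. R j = Some v" for R
    using that by auto
  then show ?thesis
    using cops_in_V unfolding capt_within_def One_nat_def by blast
qed

lemma capt_complete_graph_eq_one:
  assumes "finite V" and "card V \<le> 2 * h" and "h < card V" and "0 < m"
  shows "capt V (complete_graph V) h m = 1"
  unfolding capt_def
proof (rule Least_equality)
  show "capt_within V (complete_graph V) h m 1"
    using capt_within_complete_graph_one[OF assms(1,2) less_imp_le[OF assms(3)]] by simp
  show "1 \<le> t" if "capt_within V (complete_graph V) h m t" for t
    using that not_capt_within_complete_graph_zero[OF assms(1,3,4)] by (cases t) auto
qed

lemma capt_complete_graph_tendsto_one:
  assumes "finite V" and "card V \<le> 2 * h" and "h < card V"
  shows "(\<lambda>m. real (capt V (complete_graph V) h m)) \<longlonglongrightarrow> 1"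
proof (rule tendsto_eventually)
  show "\<forall>\<^sub>F m in sequentially. real (capt V (complete_graph V) h m) = 1"
    unfolding eventually_sequentially
    using capt_complete_graph_eq_one[OF assms] by (intro exI[of _ 1]) simp
qed

lemma strong_cop_win_complete_graph:
  assumes "finite V" and "card V \<le> 2 * h" and "h < card V"
  shows "strong_cop_win V (complete_graph V) h"
  unfolding strong_cop_win_def cop_win_def
  using capt_within_complete_graph_one[OF assms(1,2)] assms(3)
    capt_complete_graph_tendsto_one[OF assms] by auto

lemma capt_complete_graph_gt:
  assumes "finite V" and "0 < k" and "2 * k < card V" and "card V ^ Suc t \<le> m"
  shows "t < capt V (complete_graph V) k m"
proof (rule ccontr)
  assume "\<not> t < capt V (complete_graph V) k m"
  then have "card V ^ Suc (capt V (complete_graph V) k m) \<le> card V ^ Suc t"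
    using assms(3) by (intro power_increasing) auto
  then have le_m: "card V ^ Suc (capt V (complete_graph V) k m) \<le> m"
    using assms(4) by linarith
  have "V \<noteq> {}"
    using assms(3) by auto
  then have "capt_within V (complete_graph V) k m m"
    by (rule capt_within_complete_graph_in_m_rounds[OF assms(2)])
  then have "capt_within V (complete_graph V) k m (capt V (complete_graph V) k m)"
    unfolding capt_def by (rule LeastI)
  with le_m show False
    using not_capt_within_complete_graph[OF assms(1,3)] by blast
qed

lemma not_strong_cop_win_complete_graph:
  assumes "finite V" and "0 < k" and "2 * k < card V"
  shows "\<not> strong_cop_win V (complete_graph V) k"
proof
  assume "strong_cop_win V (complete_graph V) k"
  then have "Bseq (\<lambda>m. real (capt V (complete_graph V) k m))"
    unfolding strong_cop_win_def using convergent_imp_Bseq convergent_def by blast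
  then obtain K where K: "\<forall>m. real (capt V (complete_graph V) k m) \<le> K"
    by (auto elim!: BseqE)
  define T where "T = nat \<lceil>K\<rceil>"
  have "real T < real (capt V (complete_graph V) k (card V ^ Suc T))"
    using capt_complete_graph_gt[OF assms] by simp
  moreover have "K \<le> real T"
    unfolding T_def by linarith
  ultimately show False
    using K[rule_format, of "card V ^ Suc T"] by linarith
qed

theorem mainTheorem15:
  fixes V :: "'a set" and n :: nat
  assumes "finite V" and "card V = n" and "n \<ge> 2"
  shows "(\<forall>k. 1 \<le> k \<and> k \<le> nat \<lceil>real n / 2\<rceil> - 1 \<longrightarrow>
              \<not> strong_cop_win V (complete_graph V) k)
       \<and> strong_cop_win V (complete_graph V) (nat \<lceil>real n / 2\<rceil>)
       \<and> (\<lambda>m. real (capt V (complete_graph V) (nat \<lceil>real n / 2\<rceil>) m)) \<longlonglongrightarrow> 1"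
proof -
  define h where "h = nat \<lceil>real n / 2\<rceil>"
  have h: "h = (n + 1) div 2"
    unfolding h_def by linarith
  have "\<not> strong_cop_win V (complete_graph V) k" if "1 \<le> k" "k \<le> h - 1" for k
    using not_strong_cop_win_complete_graph[OF assms(1)] that h assms(2) by simp
  moreover have "card V \<le> 2 * h" "h < card V"
    using h assms(2,3) by auto
  ultimately show ?thesis
    using strong_cop_win_complete_graph capt_complete_graph_tendsto_one assms(1)
    unfolding h_def by blast
qed

end
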